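(* Let $g,h$ be non-identical linear functions. Then (i) $h\circ g<g\circ h$ if and only if $\theta(h)-\theta(g)\in(0,\pi)_{2\pi}$; and (ii) $h\circ g=g\circ h$ if and only if $\theta(h)-\theta(g)\in\{0,\pi\}_{2\pi}$.
   Context: A linear function is $f(x)=ax+b$, $a,b\in\mathbb{R}$; it is identical if $f(x)=x$. The vector of $f$ is $\vec f=(b,1-a)^\top$ and $\theta(f)\in[0,2\pi)$ is its polar angle ($\theta(f)=\bot$ if $\vec f=0$). For $\theta_1,\theta_2$, $\theta_1=_{2\pi}\theta_2$ means $\theta_1-\theta_2\in2\pi\mathbb{Z}$; $[\theta_1,\theta_2]_{2\pi}=\{\theta\in[\lambda_1,\lambda_2]\mid\lambda_1=_{2\pi}\theta_1,\lambda_2=_{2\pi}\theta_2,\lambda_2-\lambda_1\in[0,2\pi)\}$ with open/half-open analogues, and for a set $S$, $S_{2\pi}=\{\theta\mid\theta=_{2\pi}\lambda\text{ for some }\lambda\in S\}$. For functions, $g<h$ means $g(x)<h(x)$ for all $x$. *)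

theory Defs
  imports Complex_Main
begin

definition linfun :: "real \<Rightarrow> real \<Rightarrow> (real \<Rightarrow> real)" where
  "linfun a b = (\<lambda>x. a * x + b)"

definition linvec :: "real \<Rightarrow> real \<Rightarrow> real \<times> real" where
  "linvec a b = (b, 1 - a)"

text \<open>Polar angle in [0, 2 pi) of a nonzero plane vector (unspecified for the zero vector).\<close>
definition polar_angle :: "real \<times> real \<Rightarrow> real" where
  "polar_angle v = (THE t. 0 \<le> t \<and> t < 2 * pi \<and>
      (\<exists>r>0. fst v = r * cos t \<and> snd v = r * sin t))"

definition theta :: "real \<Rightarrow> real \<Rightarrow> real" where
  "theta a b = polar_angle (linvec a b)"

definition mod2pi :: "real set \<Rightarrow> real set" where
  "mod2pi S = {t. \<exists>l\<in>S. \<exists>k::int. t - l = 2 * pi * of_int k}"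

definition fun_lt :: "(real \<Rightarrow> real) \<Rightarrow> (real \<Rightarrow> real) \<Rightarrow> bool" where
  "fun_lt g h \<longleftrightarrow> (\<forall>x. g x < h x)"

end

theory Submission
  imports Defs "HOL-Analysis.Analysis"
begin

(*
  For g x = a x + b write the vector of g as (b, 1 - a). Then
  (g o h) x - (h o g) x = b1 (1 - a2) - b2 (1 - a1) does not depend on x: it is the cross
  product of the vectors of g and h. In polar coordinates this cross product is
  r1 r2 sin (theta h - theta g), so its sign is the sign of the sine of the angle
  difference, which is positive exactly on (0, pi) and zero exactly on {0, pi} modulo 2 pi.
*)

lemma mod2pi_iff: "d \<in> mod2pi S \<longleftrightarrow> (\<exists>k::int. d - 2 * pi * of_int k \<in> S)"
proof
  assume "d \<in> mod2pi S"
  then obtain l k where "l \<in> S" "d - l = 2 * pi * of_int k" unfolding mod2pi_def by blast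
  then have "d - 2 * pi * of_int k \<in> S" by (simp add: algebra_simps)
  then show "\<exists>k::int. d - 2 * pi * of_int k \<in> S" ..
next
  assume "\<exists>k::int. d - 2 * pi * of_int k \<in> S"
  then obtain k :: int where "d - 2 * pi * of_int k \<in> S" ..
  then show "d \<in> mod2pi S"
    unfolding mod2pi_def by (auto intro!: bexI[of _ "d - 2 * pi * of_int k"])
qed

lemma reduce_mod_2pi:
  obtains k :: int where "0 \<le> d - 2 * pi * of_int k" "d - 2 * pi * of_int k < 2 * pi"
proof
  define k where "k = \<lfloor>d / (2 * pi)\<rfloor>"
  have "of_int k \<le> d / (2 * pi)" "d / (2 * pi) < of_int k + 1"
    unfolding k_def by linarith+
  then show "0 \<le> d - 2 * pi * of_int k" "d - 2 * pi * of_int k < 2 * pi"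
    by (simp_all add: field_simps)
qed

lemma sin_minus_2pi_int: "sin (d - 2 * pi * of_int k) = sin d"
  by (simp add: sin_diff)

lemma sin_gt_zero_iff_mod2pi: "0 < sin d \<longleftrightarrow> d \<in> mod2pi {0<..<pi}"
proof
  assume pos: "0 < sin d"
  obtain k :: int where l: "0 \<le> d - 2 * pi * of_int k" "d - 2 * pi * of_int k < 2 * pi"
    using reduce_mod_2pi .
  have "0 < sin (d - 2 * pi * of_int k)"
    using pos by (simp add: sin_minus_2pi_int)
  then have "d - 2 * pi * of_int k \<noteq> 0" "\<not> pi \<le> d - 2 * pi * of_int k"
    using l(2) sin_le_zero[of "d - 2 * pi * of_int k"] by auto
  then have "d - 2 * pi * of_int k \<in> {0<..<pi}"
    using l(1) by (auto simp: not_le)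
  then show "d \<in> mod2pi {0<..<pi}"
    unfolding mod2pi_iff ..
next
  assume "d \<in> mod2pi {0<..<pi}"
  then obtain k :: int where "d - 2 * pi * of_int k \<in> {0<..<pi}"
    unfolding mod2pi_iff ..
  then show "0 < sin d"
    using sin_gt_zero sin_minus_2pi_int by (metis greaterThanLessThan_iff)
qed

lemma sin_eq_zero_iff_mod2pi: "sin d = 0 \<longleftrightarrow> d \<in> mod2pi {0, pi}"
proof
  assume "sin d = 0"
  then obtain i :: int where i: "d = of_int i * pi"
    using sin_zero_iff_int2 by auto
  consider m where "i = 2 * m" | m where "i = 2 * m + 1"
    by (metis evenE oddE)
  then show "d \<in> mod2pi {0, pi}"
    by cases (auto simp: mod2pi_iff i algebra_simps)
next
  assume "d \<in> mod2pi {0, pi}"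
  then obtain k :: int where "d - 2 * pi * of_int k = 0 \<or> d - 2 * pi * of_int k = pi"
    unfolding mod2pi_iff by auto
  then show "sin d = 0"
    by (metis sin_minus_2pi_int sin_pi sin_zero)
qed

lemma polar_angle_eqI:
  assumes "0 < r" "0 \<le> t" "t < 2 * pi"
  shows "polar_angle (r * cos t, r * sin t) = t"
  unfolding polar_angle_def
proof (rule the_equality)
  show "0 \<le> t \<and> t < 2 * pi \<and>
      (\<exists>q>0. fst (r * cos t, r * sin t) = q * cos t \<and> snd (r * cos t, r * sin t) = q * sin t)"
    using assms by auto
next
  fix s
  assume "0 \<le> s \<and> s < 2 * pi \<and>
    (\<exists>q>0. fst (r * cos t, r * sin t) = q * cos s \<and> snd (r * cos t, r * sin t) = q * sin s)"
  then obtain q where s: "0 \<le> s" "s < 2 * pi" "0 < q" "r * cos t = q * cos s" "r * sin t = q * sin s"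
    by auto
  have "of_real q * exp (\<i> * of_real s) = of_real r * exp (\<i> * of_real t)"
    using s by (simp add: cis_conv_exp[symmetric] complex_eq_iff)
  then show "s = t"
    using Arg2pi_unique s assms by metis
qed

lemma polar_coordinates:
  assumes "v \<noteq> (0, 0)"
  obtains r t where "0 < r" "0 \<le> t" "t < 2 * pi" "v = (r * cos t, r * sin t)"
proof -
  obtain x y where v: "v = (x, y)" by fastforce
  define r where "r = sqrt (x\<^sup>2 + y\<^sup>2)"
  have pos: "0 < x\<^sup>2 + y\<^sup>2" using assms v by (simp add: sum_power2_gt_zero_iff)
  then have r: "0 < r" "r\<^sup>2 = x\<^sup>2 + y\<^sup>2" unfolding r_def by auto
  have "(x / r)\<^sup>2 + (y / r)\<^sup>2 = (x\<^sup>2 + y\<^sup>2) / r\<^sup>2"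
    by (simp add: power_divide add_divide_distrib)
  then have "(x / r)\<^sup>2 + (y / r)\<^sup>2 = 1"
    unfolding r(2)[symmetric] using r(1) by simp
  then obtain t where "0 \<le> t" "t < 2 * pi" "x / r = cos t" "y / r = sin t"
    using sincos_total_2pi by blast
  with r show ?thesis using that[of r t] v by (simp add: field_simps)
qed

definition cross2 :: "real \<times> real \<Rightarrow> real \<times> real \<Rightarrow> real" where
  "cross2 v w = fst v * snd w - snd v * fst w"

lemma cross2_polar:
  "cross2 (r * cos s, r * sin s) (q * cos t, q * sin t) = r * q * sin (t - s)"
  by (simp add: cross2_def sin_diff algebra_simps)

lemma linfun_eq_id_iff: "linfun a b = id \<longleftrightarrow> linvec a b = (0, 0)"
proof
  assume "linfun a b = id"
  then have "linfun a b 0 = 0" "linfun a b 1 = 1" by simp_all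
  then show "linvec a b = (0, 0)" by (simp add: linfun_def linvec_def)
qed (simp add: linfun_def linvec_def fun_eq_iff)

lemma linfun_commutator:
  "(linfun a1 b1 \<circ> linfun a2 b2) x - (linfun a2 b2 \<circ> linfun a1 b1) x
     = cross2 (linvec a1 b1) (linvec a2 b2)"
  by (simp add: linfun_def linvec_def cross2_def algebra_simps)

lemma linfun_comp_less_iff:
  "fun_lt (linfun a2 b2 \<circ> linfun a1 b1) (linfun a1 b1 \<circ> linfun a2 b2)
     \<longleftrightarrow> 0 < cross2 (linvec a1 b1) (linvec a2 b2)"
  unfolding fun_lt_def using linfun_commutator[of a1 b1 a2 b2] by (metis diff_gt_0_iff_gt)

lemma linfun_comp_commute_iff:
  "linfun a2 b2 \<circ> linfun a1 b1 = linfun a1 b1 \<circ> linfun a2 b2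
     \<longleftrightarrow> cross2 (linvec a1 b1) (linvec a2 b2) = 0"
  unfolding fun_eq_iff using linfun_commutator[of a1 b1 a2 b2] by (metis eq_iff_diff_eq_0)

theorem mainTheorem6:
  fixes a1 b1 a2 b2 :: real
  defines "g \<equiv> linfun a1 b1" and "h \<equiv> linfun a2 b2"
  assumes "g \<noteq> id" and "h \<noteq> id"
  shows "(fun_lt (h \<circ> g) (g \<circ> h) \<longleftrightarrow>
            theta a2 b2 - theta a1 b1 \<in> mod2pi {0<..<pi})
       \<and> (h \<circ> g = g \<circ> h \<longleftrightarrow>
            theta a2 b2 - theta a1 b1 \<in> mod2pi {0, pi})"
proof -
  obtain r1 t1 where r1: "0 < r1" "0 \<le> t1" "t1 < 2 * pi"
    and v1: "linvec a1 b1 = (r1 * cos t1, r1 * sin t1)"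
    using polar_coordinates assms(3) unfolding g_def linfun_eq_id_iff by metis
  obtain r2 t2 where r2: "0 < r2" "0 \<le> t2" "t2 < 2 * pi"
    and v2: "linvec a2 b2 = (r2 * cos t2, r2 * sin t2)"
    using polar_coordinates assms(4) unfolding h_def linfun_eq_id_iff by metis
  have "theta a1 b1 = t1" "theta a2 b2 = t2"
    unfolding theta_def v1 v2 using polar_angle_eqI r1 r2 by simp_all
  moreover have "cross2 (linvec a1 b1) (linvec a2 b2) = r1 * r2 * sin (t2 - t1)"
    unfolding v1 v2 cross2_polar ..
  ultimately show ?thesis using r1(1) r2(1)
    unfolding g_def h_def linfun_comp_less_iff linfun_comp_commute_iff
      sin_gt_zero_iff_mod2pi[symmetric] sin_eq_zero_iff_mod2pi[symmetric]
    by (simp add: zero_less_mult_iff mult_less_0_iff)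
qed

end
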